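(* Let $p$ be an odd prime with $p\equiv 1\pmod 4$, and let $B$ be a perfect $B[-1,3](p)$ set. If $i\in B$, then $6i\in B$ or $-6i\in B$ (computed modulo $p$).
   Context: A set $B\subseteq\mathbb{Z}_p$ is a perfect $B[-1,3](p)$ set if every nonzero element of $\mathbb{Z}_p$ has a unique representation $ab \bmod p$ with $a\in\{-1,1,2,3\}$ and $b\in B$ (and $0$ has no such representation); equivalently $B\subseteq\mathbb{Z}_p^\ast$, $|B|=(p-1)/4$, and the sets $\{-b,b,2b,3b\}$, $b\in B$, partition $\mathbb{Z}_p^\ast=\mathbb{Z}_p\setminus\{0\}$. *)

theory Defs
  imports "HOL-Computational_Algebra.Primes"
begin

text \<open>Elements of Z_p are represented by their canonical residues in {0..<p} (as integers).\<close>

definition perfect_B13 :: "nat \<Rightarrow> int set \<Rightarrow> bool" where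
  "perfect_B13 p B \<longleftrightarrow>
     B \<subseteq> {0..<int p} \<and>
     (\<forall>x \<in> {1..<int p}. \<exists>!ab. fst ab \<in> {-1,1,2,3} \<and> snd ab \<in> B \<and> (fst ab * snd ab) mod int p = x) \<and>
     \<not> (\<exists>a \<in> {-1,1,2,3::int}. \<exists>b \<in> B. (a * b) mod int p = 0)"

end

theory Submission
  imports Defs "HOL-Number_Theory.Cong"
begin

text \<open>Write \<open>6i = a b\<close> with \<open>a \<in> {-1,1,2,3}\<close> and \<open>b \<in> B\<close>. If \<open>a = 2\<close> then \<open>b = 3i\<close>,
  and if \<open>a = 3\<close> then \<open>b = 2i\<close>; either way the element \<open>b\<close> would be represented twice,
  as \<open>1 \<cdot> b\<close> and as \<open>3 \<cdot> i\<close> resp. \<open>2 \<cdot> i\<close>. Hence \<open>a = \<plusminus>1\<close>. The hypotheses on \<open>p\<close> serve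
  only to make \<open>2\<close> and \<open>3\<close> invertible modulo \<open>p\<close>.\<close>

lemma mod_nonzero_in_range:
  fixes x m :: int
  assumes "0 < m" "x mod m \<noteq> 0"
  shows "x mod m \<in> {1..<m}"
proof -
  have "0 \<le> x mod m" "x mod m < m" using assms(1) by simp_all
  with assms(2) show ?thesis by simp
qed

lemma perfect_B13_subset: "perfect_B13 p B \<Longrightarrow> B \<subseteq> {0..<int p}"
  by (simp add: perfect_B13_def)

lemma perfect_B13_modulus_pos: "perfect_B13 p B \<Longrightarrow> b \<in> B \<Longrightarrow> 0 < int p"
  using perfect_B13_subset by fastforce

lemma perfect_B13_mult_nonzero:
  assumes "perfect_B13 p B" "a \<in> {-1,1,2,3}" "b \<in> B"
  shows "(a * b) mod int p \<noteq> 0"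
  using assms by (auto simp: perfect_B13_def)

lemma perfect_B13_represents:
  assumes "perfect_B13 p B" "x \<in> {1..<int p}"
  obtains a b where "a \<in> {-1,1,2,3}" "b \<in> B" "(a * b) mod int p = x"
proof -
  from assms obtain ab where "fst ab \<in> {-1,1,2,3}" "snd ab \<in> B" "(fst ab * snd ab) mod int p = x"
    unfolding perfect_B13_def by blast
  then show ?thesis using that by blast
qed

lemma perfect_B13_unique_multiplier:
  assumes "perfect_B13 p B"
    and "a1 \<in> {-1,1,2,3}" "b1 \<in> B" and "a2 \<in> {-1,1,2,3}" "b2 \<in> B"
    and "(a1 * b1) mod int p = (a2 * b2) mod int p"
  shows "a1 = a2"
proof -
  define x where "x = (a1 * b1) mod int p"
  have "0 < int p" using perfect_B13_modulus_pos[OF assms(1,3)] .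
  moreover have "x \<noteq> 0" using perfect_B13_mult_nonzero[OF assms(1-3)] by (simp add: x_def)
  ultimately have "x \<in> {1..<int p}" unfolding x_def by (rule mod_nonzero_in_range)
  then have "\<exists>!ab. fst ab \<in> {-1,1,2,3} \<and> snd ab \<in> B \<and> (fst ab * snd ab) mod int p = x"
      (is "\<exists>!ab. ?rep ab")
    using assms(1) by (simp add: perfect_B13_def)
  moreover have "?rep (a1, b1)" "?rep (a2, b2)" using assms(2-6) by (simp_all add: x_def)
  ultimately have "(a1, b1) = (a2, b2)" by blast
  then show ?thesis by simp
qed

lemma perfect_B13_mult_notin:
  assumes "perfect_B13 p B" "i \<in> B" "c \<in> {-1,2,3}"
  shows "(c * i) mod int p \<notin> B"
proof
  assume in_B: "(c * i) mod int p \<in> B"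
  have "1 = c"
    by (rule perfect_B13_unique_multiplier[OF assms(1) _ in_B _ assms(2)]) (use assms(3) in auto)
  with assms(3) show False by simp
qed

lemma mod_eq_of_mult_cong:
  fixes b c d :: int
  assumes "coprime c m" "b \<in> {0..<m}" "(c * b) mod m = (c * d) mod m"
  shows "b = d mod m"
proof -
  have "[b = d] (mod m)"
    using assms(3) cong_mult_lcancel[OF assms(1)] by (simp add: cong_def)
  with assms(2) show ?thesis by (simp add: cong_def)
qed

lemma prime_1_mod_4_coprime_6:
  assumes "prime p" "p mod 4 = 1"
  shows "coprime (int p) 6"
proof -
  have "p \<noteq> 2" "p \<noteq> 3" using assms(2) by auto
  then have "\<not> p dvd 2" "\<not> p dvd 3"
    using primes_dvd_imp_eq[OF assms(1), of 2] primes_dvd_imp_eq[OF assms(1), of 3] by auto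
  then have "\<not> int p dvd 2" "\<not> int p dvd 3"
    using int_dvd_int_iff[of p 2] int_dvd_int_iff[of p 3] by simp_all
  moreover have "prime (int p)" using assms(1) by simp
  ultimately have "coprime (int p) 2" "coprime (int p) 3"
    by (blast intro: prime_imp_coprime)+
  then have "coprime (int p) (2 * 3)" by (simp only: coprime_mult_right_iff)
  then show ?thesis by simp
qed

lemma perfect_B13_six_mult_mem:
  assumes "perfect_B13 p B" "coprime (int p) 6" "i \<in> B"
  shows "(6 * i) mod int p \<in> B \<or> (- 6 * i) mod int p \<in> B"
proof -
  have p_pos: "0 < int p" using perfect_B13_modulus_pos[OF assms(1,3)] .
  have "\<not> int p dvd i"
    using perfect_B13_mult_nonzero[OF assms(1) _ assms(3), of 1] by (simp add: dvd_eq_mod_eq_0)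
  then have "(6 * i) mod int p \<in> {1..<int p}"
    using coprime_dvd_mult_right_iff[OF assms(2)] p_pos
    by (intro mod_nonzero_in_range) (simp_all add: dvd_eq_mod_eq_0)
  then obtain a b where a: "a \<in> {-1,1,2,3}" and b: "b \<in> B"
      and rep: "(a * b) mod int p = (6 * i) mod int p"
    using perfect_B13_represents[OF assms(1)] by blast
  have b_range: "b \<in> {0..<int p}" using b perfect_B13_subset[OF assms(1)] by blast
  have coprime_a: "coprime a (int p)"
    using a assms(2) coprime_mult_right_iff[of "int p" 2 3] by (auto simp: coprime_commute)
  have b_eq: "b = (d * i) mod int p" if "a * d = 6" for d
  proof (rule mod_eq_of_mult_cong[OF coprime_a b_range])
    have "a * (d * i) = 6 * i" using that by (metis mult.assoc)
    then show "(a * b) mod int p = (a * (d * i)) mod int p" using rep by (simp only:)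
  qed
  have not_in_B: "(c * i) mod int p \<notin> B" if "c \<in> {2,3}" for c
    using perfect_B13_mult_notin[OF assms(1,3)] that by blast
  from a consider "a = -1" | "a = 1" | "a = 2" | "a = 3" by blast
  then show ?thesis
  proof cases
    case 1
    then show ?thesis using b b_eq[of "-6"] by simp
  next
    case 2
    then show ?thesis using b b_eq[of 6] by simp
  next
    case 3
    then show ?thesis using b b_eq[of 3] not_in_B[of 3] by simp
  next
    case 4
    then show ?thesis using b b_eq[of 2] not_in_B[of 2] by simp
  qed
qed

theorem lemma4p4:
  fixes p :: nat and B :: "int set" and i :: int
  assumes "prime p" and "odd p" and "p mod 4 = 1"
    and "perfect_B13 p B"
    and "i \<in> B"
  shows "(6 * i) mod int p \<in> B \<or> (- 6 * i) mod int p \<in> B"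
  using perfect_B13_six_mult_mem[OF assms(4) prime_1_mod_4_coprime_6[OF assms(1,3)] assms(5)] .

end
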